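(* There exists $c_0>0$ such that for all $b,c\in(0,c_0)$ there exists $n_0$ such that for every $n\ge n_0$ the following holds. If $G$ is a $3$-graph on $n$ vertices with $\delta(G) \ge (3/4-c)n$, then for any partition of $V(G)$ into two parts there are at least $bn^4$ copies of $K^3_4$ in $G$ with an even number of vertices in both parts.
   Context: A $3$-graph is a set of $3$-element subsets (edges) of a vertex set; $\delta(G)$ is the largest $m$ such that every pair of vertices lies in at least $m$ edges. A copy of $K^3_4$ in $G$ is a $4$-set of vertices all of whose $3$-subsets are edges of $G$. *)

theory Defs
  imports Complex_Main
begin

definition is_3graph :: "'a set \<Rightarrow> 'a set set \<Rightarrow> bool" where
  "is_3graph V G \<longleftrightarrow> (\<forall>e\<in>G. e \<subseteq> V \<and> card e = 3)"

definition codeg :: "'a set set \<Rightarrow> 'a \<Rightarrow> 'a \<Rightarrow> nat" where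
  "codeg G x y = card {e\<in>G. x \<in> e \<and> y \<in> e}"

definition min_codeg_ge :: "'a set \<Rightarrow> 'a set set \<Rightarrow> real \<Rightarrow> bool" where
  "min_codeg_ge V G m \<longleftrightarrow> (\<forall>x\<in>V. \<forall>y\<in>V. x \<noteq> y \<longrightarrow> real (codeg G x y) \<ge> m)"

definition K43_copies :: "'a set \<Rightarrow> 'a set set \<Rightarrow> 'a set set" where
  "K43_copies V G = {S. S \<subseteq> V \<and> card S = 4 \<and> (\<forall>T\<subseteq>S. card T = 3 \<longrightarrow> T \<in> G)}"

end

theory Submission
  imports Defs "HOL-Analysis.Convex"
begin

text \<open>For an edge xyz of G, the fourth vertex v of an evenly split copy of K_4^3 on xyz must lie
  in a part determined by the parts of x, y, z, and every such v completes a copy unless one of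
  the pairs xy, xz, yz misses it. By the codegree condition each pair misses at most (1/4 + c) n
  vertices. Counting completions over ordered triples, grouping them by their first pair and
  applying Cauchy-Schwarz within the three classes of pairs (inside A, inside B, across) bounds
  the count from below by n^4 times a quartic form in the relative size of A and the average
  normalised missing degrees. On the admissible region this form is at least 1/1000, which is
  certified by explicit multipliers and Bernstein coefficients on six subintervals.\<close>

section \<open>A quartic inequality\<close>

text \<open>With a = |A|/n, and u, v (resp. w, z) the average number of vertices of A, B missed by a
  pair inside A (resp. inside B), divided by n, n^4 times this form is up to O(n^3) the
  Cauchy-Schwarz lower bound for the sum of all pair weights. The constraints in the lemmas below
  express the codegree condition and the double count of missing triples across the partition.\<close>
definition pair_form :: "real \<Rightarrow> real \<Rightarrow> real \<Rightarrow> real \<Rightarrow> real \<Rightarrow> real" where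
  "pair_form a u v w z =
     a^4 + (1-a)^4 + 6*a^2*(1-a)^2 - 4*a^3*u - 12*a^2*(1-a)*v - 12*a*(1-a)^2*w - 4*(1-a)^3*z
     + 3*a^2*(u^2 + v^2) + 3*(1-a)^2*(w^2 + z^2)"

text \<open>What remains of pair_form after subtracting multiples k1, k2, k3, mu, nu of the constraints
  and completing the squares in u, v, w, z; it depends on a only.\<close>
definition certificate_residual ::
    "real \<Rightarrow> real \<Rightarrow> real \<Rightarrow> real \<Rightarrow> real \<Rightarrow> real \<Rightarrow> real \<Rightarrow> real" where
  "certificate_residual D k1 k2 k3 mu nu a =
     a^4 + (1-a)^4 + 6*a^2*(1-a)^2 - (k1*a^2 + k2*(1-a)^2 + k3*a*(1-a)) * D
     - a^2 * ((k1 - 4*a - mu)^2 + (k1 + k3 - 12*(1-a))^2) / 12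
     - (1-a)^2 * ((k2 + k3 - 12*a - nu)^2 + (k2 - 4*(1-a))^2) / 12"

lemma pair_form_ge_certificate_residual:
  fixes t a u v w z eta D k1 k2 k3 mu nu :: real
  assumes "t \<le> certificate_residual D k1 k2 k3 mu nu a"
    and "0 \<le> k1" "0 \<le> k2" "0 \<le> k3" "k3 \<le> 4" "0 \<le> mu" "0 \<le> nu"
    and "0 \<le> u" "0 \<le> w" "u + v \<le> D" "w + z \<le> D"
    and "a^2*v + (1-a)^2*w \<le> a*(1-a)*D + eta" "0 \<le> eta"
  shows "t - 4*eta \<le> pair_form a u v w z"
proof -
  have "pair_form a u v w z = certificate_residual D k1 k2 k3 mu nu a
     + k1*a^2*(D-u-v) + k2*(1-a)^2*(D-w-z) + k3*(a*(1-a)*D + eta - a^2*v - (1-a)^2*w)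
     + mu*a^2*u + nu*(1-a)^2*w
     + 3*a^2*(u + (k1 - 4*a - mu)/6)^2 + 3*a^2*(v + (k1 + k3 - 12*(1-a))/6)^2
     + 3*(1-a)^2*(w + (k2 + k3 - 12*a - nu)/6)^2 + 3*(1-a)^2*(z + (k2 - 4*(1-a))/6)^2
     - k3*eta"
    unfolding pair_form_def certificate_residual_def by (simp add: field_simps power_numeral_reduce)
  moreover have "0 \<le> k1*a^2*(D-u-v) + k2*(1-a)^2*(D-w-z)
      + k3*(a*(1-a)*D + eta - a^2*v - (1-a)^2*w) + mu*a^2*u + nu*(1-a)^2*w"
    using assms by (intro add_nonneg_nonneg mult_nonneg_nonneg) auto
  moreover have "0 \<le> 3*a^2*(u + (k1 - 4*a - mu)/6)^2 + 3*a^2*(v + (k1 + k3 - 12*(1-a))/6)^2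
     + 3*(1-a)^2*(w + (k2 + k3 - 12*a - nu)/6)^2 + 3*(1-a)^2*(z + (k2 - 4*(1-a))/6)^2"
    by simp
  moreover have "k3*eta \<le> 4*eta"
    using assms by (intro mult_right_mono) auto
  ultimately show ?thesis
    using assms(1) by linarith
qed

definition bernstein4 ::
    "real \<Rightarrow> real \<Rightarrow> real \<Rightarrow> real \<Rightarrow> real \<Rightarrow> real \<Rightarrow> real \<Rightarrow> real \<Rightarrow> real" where
  "bernstein4 lo hi c0 c1 c2 c3 c4 a =
     c0*(hi-a)^4 + c1*(a-lo)*(hi-a)^3 + c2*(a-lo)^2*(hi-a)^2 + c3*(a-lo)^3*(hi-a) + c4*(a-lo)^4"

lemma bernstein4_nonneg:
  assumes "lo \<le> a" "a \<le> hi" "0 \<le> c0" "0 \<le> c1" "0 \<le> c2" "0 \<le> c3" "0 \<le> c4"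
  shows "0 \<le> bernstein4 lo hi c0 c1 c2 c3 c4 a"
  unfolding bernstein4_def using assms
  by (intro add_nonneg_nonneg mult_nonneg_nonneg zero_le_power) auto

lemma certificate_residual_ge_0_1_8:
  assumes "0 \<le> a" "a \<le> 1/8"
  shows "1/1000 \<le> certificate_residual (51/200) (311/32) (71/32) 0 (303/32) (47/32) a"
proof -
  have "certificate_residual (51/200) (311/32) (71/32) 0 (303/32) (47/32) a =
      1/1000 + bernstein4 0 (1/8) (62433/125) (1111983/500) (12011801/4000) (8859151/6000) (717641/4000) a"
    unfolding certificate_residual_def bernstein4_def by (simp add: field_simps power_numeral_reduce)
  moreover have "0 \<le> bernstein4 0 (1/8) (62433/125) (1111983/500) (12011801/4000) (8859151/6000) (717641/4000) a"
    using assms by (intro bernstein4_nonneg) auto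
  ultimately show ?thesis by simp
qed

lemma certificate_residual_ge_1_8_1_4:
  assumes "1/8 \<le> a" "a \<le> 1/4"
  shows "1/1000 \<le> certificate_residual (51/200) (263/32) 2 0 (239/32) 0 a"
proof -
  have "certificate_residual (51/200) (263/32) 2 0 (239/32) 0 a =
      1/1000 + bernstein4 (1/8) (1/4) (2215937/8000) (16619897/12000) (15214637/8000) (5246921/6000) (371939/6000) a"
    unfolding certificate_residual_def bernstein4_def by (simp add: field_simps power_numeral_reduce)
  moreover have "0 \<le> bernstein4 (1/8) (1/4) (2215937/8000) (16619897/12000) (15214637/8000) (5246921/6000) (371939/6000) a"
    using assms by (intro bernstein4_nonneg) auto
  ultimately show ?thesis by simp
qed

lemma certificate_residual_ge_1_4_5_16:
  assumes "1/4 \<le> a" "a \<le> 5/16"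
  shows "1/1000 \<le> certificate_residual (51/200) (185/32) (55/32) (21/16) (149/32) 0 a"
proof -
  have "certificate_residual (51/200) (185/32) (55/32) (21/16) (149/32) 0 a =
      1/1000 + bernstein4 (1/4) (5/16) (806609/375) (6653617/750) (23946483/2000) (18294533/3000) (1653603/2000) a"
    unfolding certificate_residual_def bernstein4_def by (simp add: field_simps power_numeral_reduce)
  moreover have "0 \<le> bernstein4 (1/4) (5/16) (806609/375) (6653617/750) (23946483/2000) (18294533/3000) (1653603/2000) a"
    using assms by (intro bernstein4_nonneg) auto
  ultimately show ?thesis by simp
qed

lemma certificate_residual_ge_5_16_3_8:
  assumes "5/16 \<le> a" "a \<le> 3/8"
  shows "1/1000 \<le> certificate_residual (51/200) (131/32) (47/32) (73/32) (87/32) 0 a"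
proof -
  have "certificate_residual (51/200) (131/32) (47/32) (73/32) (87/32) 0 a =
      1/1000 + bernstein4 (5/16) (3/8) (4539179/6000) (11729053/3000) (33979919/6000) (1381353/500) (116937/500) a"
    unfolding certificate_residual_def bernstein4_def by (simp add: field_simps power_numeral_reduce)
  moreover have "0 \<le> bernstein4 (5/16) (3/8) (4539179/6000) (11729053/3000) (33979919/6000) (1381353/500) (116937/500) a"
    using assms by (intro bernstein4_nonneg) auto
  ultimately show ?thesis by simp
qed

lemma certificate_residual_ge_3_8_7_16:
  assumes "3/8 \<le> a" "a \<le> 7/16"
  shows "1/1000 \<le> certificate_residual (51/200) (71/32) (19/16) (27/8) (19/32) 0 a"
proof -
  have "certificate_residual (51/200) (71/32) (19/16) (27/8) (19/32) 0 a =
      1/1000 + bernstein4 (3/8) (7/16) (238411/1500) (4435829/1500) (39647719/6000) (5101011/1000) (7636019/6000) a"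
    unfolding certificate_residual_def bernstein4_def by (simp add: field_simps power_numeral_reduce)
  moreover have "0 \<le> bernstein4 (3/8) (7/16) (238411/1500) (4435829/1500) (39647719/6000) (5101011/1000) (7636019/6000) a"
    using assms by (intro bernstein4_nonneg) auto
  ultimately show ?thesis by simp
qed

lemma certificate_residual_ge_7_16_1_2:
  assumes "7/16 \<le> a" "a \<le> 1/2"
  shows "1/1000 \<le> certificate_residual (51/200) (11/8) (9/8) (63/16) 0 0 a"
proof -
  have "certificate_residual (51/200) (11/8) (9/8) (63/16) 0 0 a =
      1/1000 + bernstein4 (7/16) (1/2) (1211423/750) (1045557/125) (10661743/750) (3700576/375) (297888/125) a"
    unfolding certificate_residual_def bernstein4_def by (simp add: field_simps power_numeral_reduce)
  moreover have "0 \<le> bernstein4 (7/16) (1/2) (1211423/750) (1045557/125) (10661743/750) (3700576/375) (297888/125) a"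
    using assms by (intro bernstein4_nonneg) auto
  ultimately show ?thesis by simp
qed

lemma pair_form_ge_lower_half:
  fixes a u v w z eta :: real
  assumes "0 \<le> a" "a \<le> 1/2" "0 \<le> u" "0 \<le> w" "u + v \<le> 51/200" "w + z \<le> 51/200"
    and "a^2*v + (1-a)^2*w \<le> a*(1-a)*(51/200) + eta" "0 \<le> eta"
  shows "1/1000 - 4*eta \<le> pair_form a u v w z"
proof -
  consider "a \<le> 1/8" | "1/8 \<le> a" "a \<le> 1/4" | "1/4 \<le> a" "a \<le> 5/16" | "5/16 \<le> a" "a \<le> 3/8"
    | "3/8 \<le> a" "a \<le> 7/16" | "7/16 \<le> a"
    by linarith
  then show ?thesis
  proof cases
    case 1
    show ?thesis
      by (rule pair_form_ge_certificate_residual[OF certificate_residual_ge_0_1_8]) (use 1 assms in auto)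
  next
    case 2
    show ?thesis
      by (rule pair_form_ge_certificate_residual[OF certificate_residual_ge_1_8_1_4]) (use 2 assms in auto)
  next
    case 3
    show ?thesis
      by (rule pair_form_ge_certificate_residual[OF certificate_residual_ge_1_4_5_16]) (use 3 assms in auto)
  next
    case 4
    show ?thesis
      by (rule pair_form_ge_certificate_residual[OF certificate_residual_ge_5_16_3_8]) (use 4 assms in auto)
  next
    case 5
    show ?thesis
      by (rule pair_form_ge_certificate_residual[OF certificate_residual_ge_3_8_7_16]) (use 5 assms in auto)
  next
    case 6
    show ?thesis
      by (rule pair_form_ge_certificate_residual[OF certificate_residual_ge_7_16_1_2]) (use 6 assms in auto)
  qed
qed

lemma pair_form_swap: "pair_form (1-a) z w v u = pair_form a u v w z"
  unfolding pair_form_def by (simp add: algebra_simps)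

lemma pair_form_ge:
  fixes a u v w z eta :: real
  assumes "0 \<le> a" "a \<le> 1" "0 \<le> u" "0 \<le> v" "0 \<le> w" "0 \<le> z"
    and "u + v \<le> 51/200" "w + z \<le> 51/200"
    and "a^2*v + (1-a)^2*w \<le> a*(1-a)*(51/200) + eta" "0 \<le> eta"
  shows "1/1000 - 4*eta \<le> pair_form a u v w z"
proof (cases "a \<le> 1/2")
  case True
  then show ?thesis using pair_form_ge_lower_half assms by simp
next
  case False
  have "1/1000 - 4*eta \<le> pair_form (1-a) z w v u"
    by (rule pair_form_ge_lower_half) (use assms False in \<open>auto simp: algebra_simps\<close>)
  then show ?thesis by (simp add: pair_form_swap)
qed

lemma normalised_pair_sums:
  fixes N S T D m :: real
  assumes "0 \<le> N" "0 \<le> S" "0 \<le> T" "S + T \<le> N * (D * m)" "0 < m" "0 \<le> D"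
  obtains u v where "0 \<le> u" "0 \<le> v" "u + v \<le> D" "S = N*m*u" "T = N*m*v"
    "S^2/N = N*m^2*u^2" "T^2/N = N*m^2*v^2"
proof (cases "N = 0")
  case True
  then have "S = 0" "T = 0" using assms by auto
  with True show ?thesis using that[of 0 0] assms by simp
next
  case False
  then have Nm: "0 < N * m" using assms by simp
  have "S/(N*m) + T/(N*m) = (S + T)/(N*m)" by (simp add: add_divide_distrib)
  also have "\<dots> \<le> N * (D * m) / (N * m)" using assms(4) Nm by (intro divide_right_mono) auto
  also have "\<dots> = D" using False assms(5) by simp
  finally have "S/(N*m) + T/(N*m) \<le> D" .
  then show ?thesis
    using that[of "S/(N*m)" "T/(N*m)"] Nm False assms by (simp add: power2_eq_square)
qed

lemma class_term_le:
  fixes a b m u v L :: real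
  assumes "0 \<le> u" "0 \<le> v" "u + v \<le> 51/200" "a^2 + b^2 \<le> m^2" "0 \<le> L"
  shows "a^2 + b^2 - L + 3*m^2*(u^2 + v^2) \<le> 2*m^2"
proof -
  have "u^2 + v^2 \<le> (u + v)^2" using assms by (simp add: power2_eq_square algebra_simps)
  also have "\<dots> \<le> (51/200)^2" using assms by (intro power_mono) auto
  finally have "3*(u^2 + v^2) \<le> 1" by (simp add: power2_eq_square)
  then have "m^2*(3*(u^2 + v^2)) \<le> m^2*1" by (intro mult_left_mono) auto
  then show ?thesis using assms by (simp add: algebra_simps)
qed

lemma scaled_pair_form_ge:
  fixes a b m u v w z :: real
  assumes ab: "0 \<le> a" "0 \<le> b" "m = a + b" "1 \<le> m"
    and uvwz: "0 \<le> u" "0 \<le> v" "0 \<le> w" "0 \<le> z" "u + v \<le> 51/200" "w + z \<le> 51/200"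
    and cross: "a*(a-1)*v + b*(b-1)*w \<le> a*b*(51/200)"
  defines "YA \<equiv> a^2 + b^2 - 4*a*m*u - 12*b*m*v + 3*m^2*(u^2 + v^2)"
    and "YB \<equiv> a^2 + b^2 - 12*a*m*w - 4*b*m*z + 3*m^2*(w^2 + z^2)"
  shows "m^4/1000 - 5*m^3 \<le> a*(a-1)*YA + 4*a^2*b^2 + b*(b-1)*YB"
proof -
  define D :: real where "D = 51/200"
  define s where "s = a / m"
  have m0: "0 < m" using ab by simp
  have a_eq: "a = s*m" and b_eq: "b = (1-s)*m" using m0 ab by (simp_all add: s_def field_simps)
  have "a*v + b*w \<le> a*D + b*D"
    using uvwz ab by (intro add_mono mult_left_mono) (auto simp: D_def)
  moreover have "a^2*v + b^2*w = a*(a-1)*v + b*(b-1)*w + (a*v + b*w)"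
    by (simp add: algebra_simps power2_eq_square)
  moreover have "m*D = a*D + b*D" using ab by (simp add: algebra_simps)
  ultimately have "a^2*v + b^2*w \<le> a*b*D + m*D"
    using cross unfolding D_def by linarith
  then have "(s^2*v + (1-s)^2*w) * m^2 \<le> (s*(1-s)*D + D/m) * m^2"
    unfolding a_eq b_eq using m0 by (simp add: algebra_simps power2_eq_square)
  then have "s^2*v + (1-s)^2*w \<le> s*(1-s)*(51/200) + D/m"
    using m0 by (simp add: D_def mult_le_cancel_right)
  then have form: "1/1000 - 4*(D/m) \<le> pair_form s u v w z"
    by (intro pair_form_ge) (use ab m0 uvwz in \<open>auto simp: s_def D_def\<close>)
  txt \<open>Replacing a(a - 1), b(b - 1) by a^2, b^2 turns the right-hand side into m^4 times
    pair_form s u v w z, at a cost of a YA + b YB \<le> 2 m^3.\<close>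
  have "a^2 + b^2 \<le> m^2" using ab by (simp add: power2_eq_square algebra_simps)
  moreover have "0 \<le> 4*a*m*u + 12*b*m*v" "0 \<le> 12*a*m*w + 4*b*m*z" using ab uvwz m0 by simp_all
  ultimately have "YA \<le> 2*m^2" "YB \<le> 2*m^2"
    using class_term_le[of u v a b m "4*a*m*u + 12*b*m*v"] class_term_le[of w z a b m "12*a*m*w + 4*b*m*z"]
      uvwz unfolding YA_def YB_def by linarith+
  then have class_terms: "a*YA \<le> a*(2*m^2)" "b*YB \<le> b*(2*m^2)"
    using ab by (simp_all add: mult_left_mono)
  have "a^2*YA + 4*a^2*b^2 + b^2*YB = m^4 * pair_form s u v w z"
    unfolding YA_def YB_def pair_form_def a_eq b_eq by algebra
  moreover have "m^4 * (1/1000 - 4*(D/m)) \<le> m^4 * pair_form s u v w z"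
    using form by (intro mult_left_mono) auto
  moreover have "m^4 * (1/1000 - 4*(D/m)) = m^4/1000 - 4*D*m^3"
    using m0 by (simp add: field_simps power3_eq_cube power4_eq_xxxx)
  moreover have "a*(2*m^2) + b*(2*m^2) = 2*m^3"
    using ab by (simp add: power3_eq_cube power2_eq_square algebra_simps)
  moreover have "a*(a-1)*YA + 4*a^2*b^2 + b*(b-1)*YB = (a^2*YA + 4*a^2*b^2 + b^2*YB) - a*YA - b*YB"
    by (simp add: algebra_simps power2_eq_square)
  moreover have "4*D*m^3 \<le> 3*m^3" using m0 by (simp add: D_def)
  ultimately show ?thesis using class_terms by linarith
qed

lemma class_sums_ge:
  fixes a b m N1 N2 P1 Q R P2 :: real
  assumes ab: "0 \<le> a" "0 \<le> b" "m = a + b" "1 \<le> m"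
    and N: "N1 = a*(a-1)" "N2 = b*(b-1)" "0 \<le> N1" "0 \<le> N2"
    and P: "0 \<le> P1" "0 \<le> Q" "0 \<le> R" "0 \<le> P2"
    and AA: "P1 + Q \<le> N1 * (51/200 * m)"
    and AB: "Q + R \<le> a*b * (51/200 * m)"
    and BB: "R + P2 \<le> N2 * (51/200 * m)"
  shows "m^4/1000 - 5*m^3 \<le>
      (N1*(a^2 + b^2) - 4*a*P1 - 4*b*Q + 3*P1^2/N1 + 3*Q^2/N1)
    + 2*(a*b*(2*a*b) - 4*b*Q - 4*a*R)
    + (N2*(a^2 + b^2) - 4*a*R - 4*b*P2 + 3*R^2/N2 + 3*P2^2/N2)"
proof -
  have m0: "0 < m" using ab by simp
  obtain u v where uv: "0 \<le> u" "0 \<le> v" "u + v \<le> 51/200" "P1 = N1*m*u" "Q = N1*m*v"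
      "P1^2/N1 = N1*m^2*u^2" "Q^2/N1 = N1*m^2*v^2"
    using normalised_pair_sums[OF N(3) P(1,2) AA m0] by auto
  obtain w z where wz: "0 \<le> w" "0 \<le> z" "w + z \<le> 51/200" "R = N2*m*w" "P2 = N2*m*z"
      "R^2/N2 = N2*m^2*w^2" "P2^2/N2 = N2*m^2*z^2"
    using normalised_pair_sums[OF N(4) P(3,4) BB m0] by auto
  have "(N1*v + N2*w) * m \<le> (a*b*(51/200)) * m"
    using AB uv(5) wz(4) by (simp add: algebra_simps)
  then have cross: "a*(a-1)*v + b*(b-1)*w \<le> a*b*(51/200)"
    using m0 N by simp
  have "m^4/1000 - 5*m^3 \<le>
      a*(a-1)*(a^2 + b^2 - 4*a*m*u - 12*b*m*v + 3*m^2*(u^2 + v^2)) + 4*a^2*b^2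
    + b*(b-1)*(a^2 + b^2 - 12*a*m*w - 4*b*m*z + 3*m^2*(w^2 + z^2))"
    by (rule scaled_pair_form_ge) (use ab uv wz cross in auto)
  also have "\<dots> = (N1*(a^2 + b^2) - 4*a*P1 - 4*b*Q + 3*P1^2/N1 + 3*Q^2/N1)
    + 2*(a*b*(2*a*b) - 4*b*Q - 4*a*R)
    + (N2*(a^2 + b^2) - 4*a*R - 4*b*P2 + 3*R^2/N2 + 3*P2^2/N2)"
  proof -
    have "3*P1^2/N1 = 3*(N1*m^2*u^2)" "3*Q^2/N1 = 3*(N1*m^2*v^2)"
      "3*R^2/N2 = 3*(N2*m^2*w^2)" "3*P2^2/N2 = 3*(N2*m^2*z^2)"
      using uv(6,7) wz(6,7) by simp_all
    then show ?thesis
      unfolding uv(4,5) wz(4,5) N(1,2) by (simp add: algebra_simps power2_eq_square)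
  qed
  finally show ?thesis .
qed

section \<open>Sums over classes of pairs\<close>

definition same_class_weight :: "real \<Rightarrow> real \<Rightarrow> real \<Rightarrow> real \<Rightarrow> real" where
  "same_class_weight a b \<alpha> \<beta> = (a - \<alpha>)*(a - 3*\<alpha>) + (b - \<beta>)*(b - 3*\<beta>)"

definition cross_class_weight :: "real \<Rightarrow> real \<Rightarrow> real \<Rightarrow> real \<Rightarrow> real" where
  "cross_class_weight a b \<alpha> \<beta> = (a - \<alpha>)*(b - 3*\<beta>) + (b - \<beta>)*(a - 3*\<alpha>)"

lemma sum_squared_div_card_le:
  fixes f :: "'a \<Rightarrow> real"
  shows "(\<Sum>i\<in>I. f i)^2 / card I \<le> (\<Sum>i\<in>I. (f i)^2)"
  using sum_squared_le_sum_of_squares[of f I]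
  by (cases "card I = 0") (simp_all add: sum_nonneg divide_le_eq)

lemma sum_same_class_weight_ge:
  fixes f g :: "'p \<Rightarrow> real"
  shows "real (card P)*(a^2 + b^2) - 4*a*(\<Sum>p\<in>P. f p) - 4*b*(\<Sum>p\<in>P. g p)
      + 3*(\<Sum>p\<in>P. f p)^2/card P + 3*(\<Sum>p\<in>P. g p)^2/card P
    \<le> (\<Sum>p\<in>P. same_class_weight a b (f p) (g p))"
proof -
  have "(\<Sum>p\<in>P. same_class_weight a b (f p) (g p))
      = (\<Sum>p\<in>P. (a^2 + b^2) - (4*a)*f p - (4*b)*g p + 3*(f p)^2 + 3*(g p)^2)"
    by (rule sum.cong) (auto simp: same_class_weight_def power2_eq_square algebra_simps)
  also have "\<dots> = real (card P)*(a^2 + b^2) - 4*a*(\<Sum>p\<in>P. f p) - 4*b*(\<Sum>p\<in>P. g p)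
      + 3*(\<Sum>p\<in>P. (f p)^2) + 3*(\<Sum>p\<in>P. (g p)^2)"
    by (simp add: sum.distrib sum_subtractf sum_distrib_left)
  finally show ?thesis
    using sum_squared_div_card_le[of f P] sum_squared_div_card_le[of g P] by linarith
qed

lemma sum_cross_class_weight_ge:
  fixes f g :: "'p \<Rightarrow> real"
  assumes "\<And>p. p \<in> P \<Longrightarrow> 0 \<le> f p" "\<And>p. p \<in> P \<Longrightarrow> 0 \<le> g p"
  shows "real (card P)*(2*a*b) - 4*b*(\<Sum>p\<in>P. f p) - 4*a*(\<Sum>p\<in>P. g p)
    \<le> (\<Sum>p\<in>P. cross_class_weight a b (f p) (g p))"
proof -
  have "(\<Sum>p\<in>P. cross_class_weight a b (f p) (g p))
      = (\<Sum>p\<in>P. 2*a*b - (4*b)*f p - (4*a)*g p + 6*(f p * g p))"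
    by (rule sum.cong) (auto simp: cross_class_weight_def algebra_simps)
  also have "\<dots> = real (card P)*(2*a*b) - 4*b*(\<Sum>p\<in>P. f p) - 4*a*(\<Sum>p\<in>P. g p)
      + 6*(\<Sum>p\<in>P. f p * g p)"
    by (simp add: sum.distrib sum_subtractf sum_distrib_left)
  moreover have "0 \<le> (\<Sum>p\<in>P. f p * g p)" using assms by (intro sum_nonneg) auto
  ultimately show ?thesis by linarith
qed

lemma perturbed_product_ge:
  fixes e a s g N :: real
  assumes "a - 2 \<le> e" "e \<le> a" "0 \<le> e" "0 \<le> g" "g \<le> s" "s \<le> N" "a \<le> N"
  shows "a*(s - 3*g) - 9*N \<le> e*(s - 3 - 3*g)"
proof -
  have "\<bar>(e - a)*(s - 3*g)\<bar> = \<bar>e - a\<bar> * \<bar>s - 3*g\<bar>" by (rule abs_mult)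
  also have "\<dots> \<le> 2*(2*N)" by (rule mult_mono) (use assms in auto)
  finally have "-4*N \<le> (e - a)*(s - 3*g)" by linarith
  moreover have "e*(s - 3 - 3*g) = a*(s - 3*g) + (e - a)*(s - 3*g) - 3*e" by (simp add: algebra_simps)
  ultimately show ?thesis using assms by linarith
qed

definition offdiag :: "'a set \<Rightarrow> ('a \<times> 'a) set" where
  "offdiag X = (SIGMA x:X. X - {x})"

lemma finite_offdiag: "finite X \<Longrightarrow> finite (offdiag X)"
  unfolding offdiag_def by auto

lemma card_offdiag: "finite X \<Longrightarrow> real (card (offdiag X)) = real (card X) * (real (card X) - 1)"
proof -
  assume X: "finite X"
  have "card (offdiag X) = (\<Sum>x\<in>X. card X - 1)"
    unfolding offdiag_def using X by (simp add: card_Diff_singleton)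
  then show ?thesis by (cases "card X") (auto simp: algebra_simps)
qed

lemma sum_offdiag: "finite X \<Longrightarrow> (\<Sum>p\<in>offdiag X. f p) = (\<Sum>x\<in>X. \<Sum>y\<in>X - {x}. f (x, y))"
  unfolding offdiag_def by (simp add: sum.Sigma)

lemma offdiag_Un:
  "X \<inter> Y = {} \<Longrightarrow> offdiag (X \<union> Y) = (offdiag X \<union> offdiag Y) \<union> (X \<times> Y \<union> Y \<times> X)"
  unfolding offdiag_def by auto

lemma sum3_swap23:
  "(\<Sum>x\<in>X. \<Sum>y\<in>X. \<Sum>z\<in>X. f x z y) = (\<Sum>x\<in>X. \<Sum>y\<in>X. \<Sum>z\<in>X. f x y z)"
  by (rule sum.cong[OF refl], rule sum.swap)

lemma sum3_rotate:
  "(\<Sum>x\<in>X. \<Sum>y\<in>X. \<Sum>z\<in>X. f y z x) = (\<Sum>x\<in>X. \<Sum>y\<in>X. \<Sum>z\<in>X. f x y z)"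
  by (subst sum.swap) (rule sum3_swap23)

lemma card_insert3_eq_3_imp_distinct: "card {x, y, z} = 3 \<Longrightarrow> x \<noteq> y \<and> x \<noteq> z \<and> y \<noteq> z"
  by (cases "x = y"; cases "x = z"; cases "y = z") (auto simp: card_insert_if)

lemma even_card_Int_insert4_iff:
  assumes "distinct [x, y, z, v]"
  shows "even (card ({x, y, z, v} \<inter> S)) \<longleftrightarrow> (((x \<in> S) = (y \<in> S)) = ((z \<in> S) = (v \<in> S)))"
  using assms
  by (cases "x \<in> S"; cases "y \<in> S"; cases "z \<in> S"; cases "v \<in> S") (auto simp: card_insert_if)

lemma card3_subset_insert4:
  assumes "distinct [x, y, z, v]" "T \<subseteq> {x, y, z, v}" "card T = 3"
  shows "T = {x, y, z} \<or> T = {x, y, v} \<or> T = {x, z, v} \<or> T = {y, z, v}"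
proof -
  have "card ({x, y, z, v} - T) = 1"
    using card_Diff_subset[of T "{x, y, z, v}"] assms finite_subset[OF assms(2)] by auto
  then obtain w where w: "{x, y, z, v} - T = {w}" by (auto simp: card_1_singleton_iff)
  then have "T = {x, y, z, v} - {w}" "w \<in> {x, y, z, v}" using assms(2) by auto
  then show ?thesis using assms(1) by auto
qed

section \<open>Counting evenly split copies of K_4^3\<close>

locale codegree_partition =
  fixes n :: nat and G :: "nat set set" and A B :: "nat set" and c :: real
  assumes is_3graph_G: "is_3graph {..<n} G"
    and min_codeg_G: "min_codeg_ge {..<n} G ((3/4 - c) * real n)"
    and parts_cover: "A \<union> B = {..<n}"
    and parts_disjoint: "A \<inter> B = {}"
    and c_le: "c \<le> 1/200"
begin

abbreviation V :: "nat set" where "V \<equiv> {..<n}"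

lemma finite_A: "finite A" and finite_B: "finite B"
  using parts_cover finite_subset[of _ V] by auto

lemma card_A_add_card_B: "card A + card B = n"
  using card_Un_disjoint[OF finite_A finite_B parts_disjoint] parts_cover by simp

lemma in_B_iff: "w \<in> V \<Longrightarrow> w \<in> B \<longleftrightarrow> w \<notin> A"
  using parts_cover parts_disjoint by auto

lemma edge_subset: "e \<in> G \<Longrightarrow> e \<subseteq> V \<and> card e = 3"
  using is_3graph_G unfolding is_3graph_def by auto

lemma edge_vertices:
  assumes "{x, y, z} \<in> G"
  shows "x \<in> V \<and> y \<in> V \<and> z \<in> V \<and> x \<noteq> y \<and> x \<noteq> z \<and> y \<noteq> z"
proof -
  have "{x, y, z} \<subseteq> V" "card {x, y, z} = 3" using edge_subset[OF assms] by auto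
  then show ?thesis using card_insert3_eq_3_imp_distinct[of x y z] by blast
qed

definition missing :: "nat set \<Rightarrow> nat \<Rightarrow> nat \<Rightarrow> real" where
  "missing X x y = real (card {v\<in>X. v \<noteq> x \<and> v \<noteq> y \<and> {x, y, v} \<notin> G})"

lemma missing_commute: "missing X x y = missing X y x"
proof -
  have swap: "{y, x, v} = {x, y, v}" for v by blast
  have "{v\<in>X. v \<noteq> x \<and> v \<noteq> y \<and> {x, y, v} \<notin> G} = {v\<in>X. v \<noteq> y \<and> v \<noteq> x \<and> {y, x, v} \<notin> G}"
    unfolding swap by blast
  then show ?thesis unfolding missing_def by (simp only:)
qed

lemma missing_nonneg: "0 \<le> missing X x y"
  unfolding missing_def by simp

lemma missing_le_card: "finite X \<Longrightarrow> missing X x y \<le> card X"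
  unfolding missing_def by (simp add: card_mono)

lemma codeg_eq_card:
  assumes "x \<in> V" "y \<in> V" "x \<noteq> y"
  shows "codeg G x y = card {v\<in>V. v \<noteq> x \<and> v \<noteq> y \<and> {x, y, v} \<in> G}"
proof -
  have "{e\<in>G. x \<in> e \<and> y \<in> e} = (\<lambda>v. {x, y, v}) ` {v\<in>V. v \<noteq> x \<and> v \<noteq> y \<and> {x, y, v} \<in> G}"
  proof (rule set_eqI, rule iffI)
    fix e assume e: "e \<in> {e\<in>G. x \<in> e \<and> y \<in> e}"
    then have "e \<subseteq> V" "card e = 3" using edge_subset by auto
    then have "card (e - {x, y}) = 1"
      using e assms(3) card_Diff_subset[of "{x, y}" e] card.infinite by fastforce
    then obtain v where v: "e - {x, y} = {v}" by (auto simp: card_1_singleton_iff)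
    then have "e = {x, y, v}" "v \<noteq> x" "v \<noteq> y" "v \<in> V" using e \<open>e \<subseteq> V\<close> by auto
    then show "e \<in> (\<lambda>v. {x, y, v}) ` {v\<in>V. v \<noteq> x \<and> v \<noteq> y \<and> {x, y, v} \<in> G}"
      using e by auto
  qed auto
  moreover have "inj_on (\<lambda>v. {x, y, v}) {v\<in>V. v \<noteq> x \<and> v \<noteq> y \<and> {x, y, v} \<in> G}"
    by (rule inj_onI) (auto simp: insert_eq_iff doubleton_eq_iff)
  ultimately show ?thesis unfolding codeg_def by (simp add: card_image)
qed

lemma missing_A_add_missing_B_le:
  assumes "x \<in> V" "y \<in> V" "x \<noteq> y"
  shows "missing A x y + missing B x y \<le> 51/200 * real n"
proof -
  let ?P = "\<lambda>v. v \<noteq> x \<and> v \<noteq> y"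
  let ?MA = "{v\<in>A. ?P v \<and> {x, y, v} \<notin> G}" and ?MB = "{v\<in>B. ?P v \<and> {x, y, v} \<notin> G}"
  have "V - {x, y} = {v\<in>V. ?P v \<and> {x, y, v} \<in> G} \<union> (?MA \<union> ?MB)"
    using parts_cover by auto
  then have "card (V - {x, y}) = codeg G x y + (card ?MA + card ?MB)"
    using finite_A finite_B parts_disjoint codeg_eq_card[OF assms]
    by (simp add: card_Un_disjoint disjoint_iff)
  moreover have "card (V - {x, y}) = n - 2" using assms by (simp add: card_Diff_subset)
  moreover have "(3/4 - c) * real n \<le> codeg G x y"
    using min_codeg_G assms unfolding min_codeg_ge_def by auto
  ultimately have "missing A x y + missing B x y \<le> (1/4 + c) * real n"
    unfolding missing_def by (simp add: algebra_simps)
  also have "\<dots> \<le> 51/200 * real n" using c_le by (intro mult_right_mono) auto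
  finally show ?thesis .
qed

lemma card_link_bounds:
  assumes "finite X"
  shows "real (card X) - 2 - missing X x y \<le> card {z\<in>X. {x, y, z} \<in> G}"
    and "card {z\<in>X. {x, y, z} \<in> G} \<le> real (card X) - missing X x y"
proof -
  let ?L = "{z\<in>X. {x, y, z} \<in> G}" and ?M = "{v\<in>X. v \<noteq> x \<and> v \<noteq> y \<and> {x, y, v} \<notin> G}"
  have "X - {x, y} = ?L \<union> ?M" using edge_vertices by auto
  then have "card (X - {x, y}) = card (?L \<union> ?M)" by simp
  also have "\<dots> = card ?L + card ?M" by (rule card_Un_disjoint) (use assms in auto)
  finally have eq: "card (X - {x, y}) = card ?L + card ?M" .
  have "card X - card {x, y} \<le> card (X - {x, y})" by (rule diff_card_le_card_Diff) simp
  moreover have "card {x, y} \<le> 2" by (simp add: card_insert_if)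
  moreover have "card (X - {x, y}) \<le> card X" using assms by (simp add: card_mono)
  ultimately show "real (card X) - 2 - missing X x y \<le> card ?L"
    and "card ?L \<le> real (card X) - missing X x y"
    using eq unfolding missing_def by linarith+
qed

text \<open>The vertices v for which {x, y, z, v} meets A, and hence B, in an even number of vertices.\<close>
definition parity_class :: "nat \<Rightarrow> nat \<Rightarrow> nat \<Rightarrow> nat set" where
  "parity_class x y z = {v\<in>V. (v \<in> A) = (((x \<in> A) = (y \<in> A)) = (z \<in> A))}"

definition completions :: "nat \<Rightarrow> nat \<Rightarrow> nat \<Rightarrow> nat set" where
  "completions x y z = {v\<in>parity_class x y z. {x, y, v} \<in> G \<and> {x, z, v} \<in> G \<and> {y, z, v} \<in> G}"

definition even_K4s :: "nat set set" where
  "even_K4s = {S\<in>K43_copies V G. even (card (S \<inter> A)) \<and> even (card (S \<inter> B))}"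

lemma finite_parity_class: "finite (parity_class x y z)"
  unfolding parity_class_def by simp

lemma finite_completions: "finite (completions x y z)"
  unfolding completions_def using finite_parity_class by simp

lemma insert_completion_in_even_K4s:
  assumes "{x, y, z} \<in> G" "v \<in> completions x y z"
  shows "{x, y, z, v} \<in> even_K4s"
proof -
  from assms(2) have v: "v \<in> parity_class x y z"
    and edges: "{x, y, v} \<in> G" "{x, z, v} \<in> G" "{y, z, v} \<in> G"
    unfolding completions_def by auto
  have distinct: "distinct [x, y, z, v]"
    using edge_vertices[OF assms(1)] edge_vertices[OF edges(1)] edge_vertices[OF edges(2)] by auto
  have in_V: "x \<in> V" "y \<in> V" "z \<in> V" "v \<in> V"
    using edge_vertices[OF assms(1)] edge_vertices[OF edges(1)] by auto
  have "((x \<in> A) = (y \<in> A)) = ((z \<in> A) = (v \<in> A))"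
    using v unfolding parity_class_def by auto
  moreover have "((x \<in> B) = (y \<in> B)) = ((z \<in> B) = (v \<in> B))"
    using calculation in_B_iff in_V by auto
  moreover have "{x, y, z, v} \<in> K43_copies V G"
    unfolding K43_copies_def
    using in_V distinct card3_subset_insert4[OF distinct] assms(1) edges by auto
  ultimately show ?thesis
    unfolding even_K4s_def using even_card_Int_insert4_iff[OF distinct] by auto
qed

lemma finite_even_K4s: "finite even_K4s"
  by (rule finite_subset[of _ "Pow V"]) (auto simp: even_K4s_def K43_copies_def)

lemma card_even_K4: "S \<in> even_K4s \<Longrightarrow> card S = 4"
  unfolding even_K4s_def K43_copies_def by auto

definition completion_count :: nat where
  "completion_count =
     (\<Sum>x\<in>V. \<Sum>y\<in>V. \<Sum>z\<in>V. if {x, y, z} \<in> G then card (completions x y z) else 0)"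

text \<open>Each evenly split copy of K_4^3 is counted at most once for each of its 4^4 ordered
  quadruples of vertices.\<close>
lemma completion_count_le: "completion_count \<le> 256 * card even_K4s"
proof -
  let ?S = "SIGMA x:V. SIGMA y:V. SIGMA z:{z\<in>V. {x, y, z} \<in> G}. completions x y z"
  have fin: "finite S" if "S \<in> even_K4s" for S
    using card_even_K4[OF that] card.infinite by fastforce
  have "completion_count = card ?S"
    unfolding completion_count_def using finite_completions
    by (simp add: sum.inter_filter[symmetric] finite_SigmaI)
  also have "\<dots> \<le> card (\<Union>S\<in>even_K4s. S \<times> S \<times> S \<times> S)"
  proof (rule card_mono)
    show "finite (\<Union>S\<in>even_K4s. S \<times> S \<times> S \<times> S)"
      using finite_even_K4s fin by auto
    show "?S \<subseteq> (\<Union>S\<in>even_K4s. S \<times> S \<times> S \<times> S)"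
    proof
      fix t assume "t \<in> ?S"
      then obtain x y z v where "t = (x, y, z, v)" "{x, y, z} \<in> G" "v \<in> completions x y z"
        by auto
      then show "t \<in> (\<Union>S\<in>even_K4s. S \<times> S \<times> S \<times> S)"
        using insert_completion_in_even_K4s by blast
    qed
  qed
  also have "\<dots> \<le> (\<Sum>S\<in>even_K4s. card (S \<times> S \<times> S \<times> S))"
    by (rule card_UN_le[OF finite_even_K4s])
  also have "\<dots> = (\<Sum>S\<in>even_K4s. 256)"
    by (rule sum.cong) (auto simp: card_cartesian_product card_even_K4)
  finally show ?thesis by simp
qed

lemma card_completions_ge:
  "real (card (parity_class x y z)) - 3 - missing (parity_class x y z) x y
     - missing (parity_class x y z) x z - missing (parity_class x y z) y z
   \<le> card (completions x y z)"
proof -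
  let ?X = "parity_class x y z"
  let ?M = "\<lambda>x y. {v\<in>?X. v \<noteq> x \<and> v \<noteq> y \<and> {x, y, v} \<notin> G}"
  have "card ?X - card {x, y, z} \<le> card (?X - {x, y, z})"
    by (rule diff_card_le_card_Diff) simp
  moreover have "card {x, y, z} \<le> 3" by (simp add: card_insert_if)
  moreover have "card (?X - {x, y, z}) \<le> card (completions x y z \<union> ?M x y \<union> ?M x z \<union> ?M y z)"
    by (rule card_mono) (auto simp: completions_def finite_parity_class)
  moreover have "\<dots> \<le> card (completions x y z) + card (?M x y) + card (?M x z) + card (?M y z)"
    by (meson card_Un_le add_le_mono le_refl order_trans)
  ultimately show ?thesis unfolding missing_def by linarith
qed

lemma parity_class_swap23: "parity_class x z y = parity_class x y z"
  unfolding parity_class_def by auto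

lemma parity_class_rotate: "parity_class y z x = parity_class x y z"
  unfolding parity_class_def by auto

definition missing_in_class :: "nat \<Rightarrow> nat \<Rightarrow> nat \<Rightarrow> real" where
  "missing_in_class x y z = (if {x, y, z} \<in> G then missing (parity_class x y z) x y else 0)"

text \<open>The three missing terms of card_completions_ge contribute equally to the sum over ordered
  triples.\<close>
lemma completion_count_ge:
  "(\<Sum>x\<in>V. \<Sum>y\<in>V. \<Sum>z\<in>V. if {x, y, z} \<in> G
       then real (card (parity_class x y z)) - 3 - 3 * missing (parity_class x y z) x y else 0)
   \<le> completion_count"
proof -
  let ?c = "\<lambda>x y z. if {x, y, z} \<in> G then real (card (parity_class x y z)) - 3 else 0"
  let ?m = missing_in_class
  have "(\<Sum>x\<in>V. \<Sum>y\<in>V. \<Sum>z\<in>V. if {x, y, z} \<in> G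
       then real (card (parity_class x y z)) - 3 - 3 * missing (parity_class x y z) x y else 0)
     = (\<Sum>x\<in>V. \<Sum>y\<in>V. \<Sum>z\<in>V. ?c x y z - 3 * ?m x y z)"
    by (intro sum.cong refl) (simp add: missing_in_class_def)
  also have "\<dots> = (\<Sum>x\<in>V. \<Sum>y\<in>V. \<Sum>z\<in>V. ?c x y z) - 3 * (\<Sum>x\<in>V. \<Sum>y\<in>V. \<Sum>z\<in>V. ?m x y z)"
    by (simp add: sum_subtractf sum_distrib_left)
  also have "\<dots> = (\<Sum>x\<in>V. \<Sum>y\<in>V. \<Sum>z\<in>V. ?c x y z) - (\<Sum>x\<in>V. \<Sum>y\<in>V. \<Sum>z\<in>V. ?m x y z)
      - (\<Sum>x\<in>V. \<Sum>y\<in>V. \<Sum>z\<in>V. ?m x z y) - (\<Sum>x\<in>V. \<Sum>y\<in>V. \<Sum>z\<in>V. ?m y z x)"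
    unfolding sum3_swap23[of ?m V] sum3_rotate[of ?m V] by simp
  also have "\<dots> = (\<Sum>x\<in>V. \<Sum>y\<in>V. \<Sum>z\<in>V. ?c x y z - ?m x y z - ?m x z y - ?m y z x)"
    by (simp add: sum_subtractf)
  also have "\<dots> \<le> completion_count"
    unfolding completion_count_def of_nat_sum
  proof (intro sum_mono)
    fix x y z :: nat
    have same_edge: "{x, z, y} = {x, y, z}" "{y, z, x} = {x, y, z}" by blast+
    have same_class: "parity_class x z y = parity_class x y z" "parity_class y z x = parity_class x y z"
      by (rule parity_class_swap23 parity_class_rotate)+
    show "?c x y z - ?m x y z - ?m x z y - ?m y z x
        \<le> real (if {x, y, z} \<in> G then card (completions x y z) else 0)"
      using card_completions_ge[of x y z]
      unfolding missing_in_class_def same_class same_edge by auto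
  qed
  finally show ?thesis .
qed

definition parity_class_A :: "nat \<Rightarrow> nat \<Rightarrow> nat set" where
  "parity_class_A x y = (if (x \<in> A) = (y \<in> A) then A else B)"

definition parity_class_B :: "nat \<Rightarrow> nat \<Rightarrow> nat set" where
  "parity_class_B x y = (if (x \<in> A) = (y \<in> A) then B else A)"

lemma parity_class_in_A: "z \<in> A \<Longrightarrow> parity_class x y z = parity_class_A x y"
  unfolding parity_class_def parity_class_A_def using parts_cover parts_disjoint by auto

lemma parity_class_in_B: "z \<in> B \<Longrightarrow> parity_class x y z = parity_class_B x y"
  unfolding parity_class_def parity_class_B_def using parts_cover parts_disjoint by auto

text \<open>Up to O(n), the contribution of the pair (x, y) to the sum in completion_count_ge: the third
  vertex z runs over the common neighbours of x and y in A and in B, and its part fixes the part of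
  the fourth vertex.\<close>
definition pair_weight :: "nat \<Rightarrow> nat \<Rightarrow> real" where
  "pair_weight x y =
     (if (x \<in> A) = (y \<in> A)
      then same_class_weight (real (card A)) (real (card B)) (missing A x y) (missing B x y)
      else cross_class_weight (real (card A)) (real (card B)) (missing A x y) (missing B x y))"

lemma pair_weight_commute: "pair_weight x y = pair_weight y x"
  unfolding pair_weight_def by (simp add: missing_commute eq_commute[of "x \<in> A"])

lemma pair_weight_eq:
  "pair_weight x y =
     (real (card A) - missing A x y) * (real (card (parity_class_A x y)) - 3 * missing (parity_class_A x y) x y)
   + (real (card B) - missing B x y) * (real (card (parity_class_B x y)) - 3 * missing (parity_class_B x y) x y)"
  unfolding pair_weight_def parity_class_A_def parity_class_B_def
    same_class_weight_def cross_class_weight_def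
  by auto

lemma sum_over_part_ge:
  assumes "X = A \<or> X = B" "K = A \<or> K = B"
  shows "(real (card X) - missing X x y) * (real (card K) - 3 * missing K x y) - 9 * real n
      \<le> (\<Sum>z\<in>X. if {x, y, z} \<in> G then real (card K) - 3 - 3 * missing K x y else 0)"
proof -
  have fin: "finite X" "finite K" using assms finite_A finite_B by auto
  have le_n: "real (card X) \<le> n" "real (card K) \<le> n"
    using assms card_A_add_card_B by auto
  have "(\<Sum>z\<in>X. if {x, y, z} \<in> G then real (card K) - 3 - 3 * missing K x y else 0)
      = card {z\<in>X. {x, y, z} \<in> G} * (real (card K) - 3 - 3 * missing K x y)"
    using fin by (simp add: sum.inter_filter[symmetric])
  moreover have "(real (card X) - missing X x y) * (real (card K) - 3 * missing K x y) - 9 * real n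
      \<le> card {z\<in>X. {x, y, z} \<in> G} * (real (card K) - 3 - 3 * missing K x y)"
    by (rule perturbed_product_ge)
      (use card_link_bounds[OF fin(1), of x y] missing_nonneg[of X x y] missing_nonneg[of K x y]
        missing_le_card[OF fin(2), of x y] le_n in linarith)+
  ultimately show ?thesis by simp
qed

lemma sum_third_vertex_ge:
  assumes "x \<in> V" "y \<in> V" "x \<noteq> y"
  shows "pair_weight x y - 18 * real n \<le> (\<Sum>z\<in>V. if {x, y, z} \<in> G
      then real (card (parity_class x y z)) - 3 - 3 * missing (parity_class x y z) x y else 0)"
proof -
  let ?f = "\<lambda>z. if {x, y, z} \<in> G
      then real (card (parity_class x y z)) - 3 - 3 * missing (parity_class x y z) x y else 0"
  have "(\<Sum>z\<in>V. ?f z) = (\<Sum>z\<in>A. ?f z) + (\<Sum>z\<in>B. ?f z)"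
    using sum.union_disjoint[OF finite_A finite_B parts_disjoint, of ?f] parts_cover by simp
  also have "(\<Sum>z\<in>A. ?f z) = (\<Sum>z\<in>A. if {x, y, z} \<in> G then real (card (parity_class_A x y)) - 3
      - 3 * missing (parity_class_A x y) x y else 0)"
    by (rule sum.cong) (simp_all add: parity_class_in_A)
  also have "(\<Sum>z\<in>B. ?f z) = (\<Sum>z\<in>B. if {x, y, z} \<in> G then real (card (parity_class_B x y)) - 3
      - 3 * missing (parity_class_B x y) x y else 0)"
    by (rule sum.cong) (simp_all add: parity_class_in_B)
  finally have "(\<Sum>z\<in>V. ?f z) =
      (\<Sum>z\<in>A. if {x, y, z} \<in> G then real (card (parity_class_A x y)) - 3
        - 3 * missing (parity_class_A x y) x y else 0)
    + (\<Sum>z\<in>B. if {x, y, z} \<in> G then real (card (parity_class_B x y)) - 3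
        - 3 * missing (parity_class_B x y) x y else 0)" .
  moreover have "(real (card A) - missing A x y) * (real (card (parity_class_A x y)) - 3 * missing (parity_class_A x y) x y)
      - 9 * real n \<le> (\<Sum>z\<in>A. if {x, y, z} \<in> G then real (card (parity_class_A x y)) - 3
        - 3 * missing (parity_class_A x y) x y else 0)"
    by (rule sum_over_part_ge) (simp_all add: parity_class_A_def)
  moreover have "(real (card B) - missing B x y) * (real (card (parity_class_B x y)) - 3 * missing (parity_class_B x y) x y)
      - 9 * real n \<le> (\<Sum>z\<in>B. if {x, y, z} \<in> G then real (card (parity_class_B x y)) - 3
        - 3 * missing (parity_class_B x y) x y else 0)"
    by (rule sum_over_part_ge) (simp_all add: parity_class_B_def)
  ultimately show ?thesis unfolding pair_weight_eq by linarith
qed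

lemma completion_count_ge_pair_weights:
  "(\<Sum>p\<in>offdiag V. pair_weight (fst p) (snd p)) - 18 * real n ^ 3 \<le> completion_count"
proof -
  let ?f = "\<lambda>x y z. if {x, y, z} \<in> G
      then real (card (parity_class x y z)) - 3 - 3 * missing (parity_class x y z) x y else 0"
  have no_loop: "(\<Sum>z\<in>V. ?f x x z) = 0" for x
  proof -
    have "{x, x, z} \<notin> G" for z using edge_vertices by blast
    then show ?thesis by (simp del: insert_absorb2)
  qed
  have row: "(\<Sum>y\<in>V. \<Sum>z\<in>V. ?f x y z) = (\<Sum>y\<in>V - {x}. \<Sum>z\<in>V. ?f x y z)" if "x \<in> V" for x
    using sum.remove[OF finite_lessThan that, of "\<lambda>y. \<Sum>z\<in>V. ?f x y z"] no_loop[of x] by simp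
  have "(\<Sum>x\<in>V. \<Sum>y\<in>V. \<Sum>z\<in>V. ?f x y z) = (\<Sum>x\<in>V. \<Sum>y\<in>V - {x}. \<Sum>z\<in>V. ?f x y z)"
    by (rule sum.cong[OF refl]) (rule row)
  also have "\<dots> = (\<Sum>p\<in>offdiag V. \<Sum>z\<in>V. ?f (fst p) (snd p) z)"
    by (simp add: sum_offdiag cong: if_cong)
  also have "\<dots> \<ge> (\<Sum>p\<in>offdiag V. pair_weight (fst p) (snd p) - 18 * real n)"
    by (intro sum_mono sum_third_vertex_ge) (auto simp: offdiag_def)
  finally have "(\<Sum>p\<in>offdiag V. pair_weight (fst p) (snd p)) - real (card (offdiag V)) * (18 * real n)
      \<le> completion_count"
    using completion_count_ge by (simp add: sum_subtractf)
  moreover have "real (card (offdiag V)) * (18 * real n) \<le> 18 * real n ^ 3"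
    by (simp add: card_offdiag power3_eq_cube mult_left_mono)
  ultimately show ?thesis by linarith
qed

lemma sum_pair_weight_split:
  "(\<Sum>p\<in>offdiag V. pair_weight (fst p) (snd p)) =
     (\<Sum>p\<in>offdiag A. same_class_weight (real (card A)) (real (card B)) (missing A (fst p) (snd p)) (missing B (fst p) (snd p)))
   + 2 * (\<Sum>p\<in>A \<times> B. cross_class_weight (real (card A)) (real (card B)) (missing A (fst p) (snd p)) (missing B (fst p) (snd p)))
   + (\<Sum>p\<in>offdiag B. same_class_weight (real (card A)) (real (card B)) (missing A (fst p) (snd p)) (missing B (fst p) (snd p)))"
proof -
  let ?w = "\<lambda>p. pair_weight (fst p) (snd p)"
  have fin: "finite (offdiag A)" "finite (offdiag B)" "finite (A \<times> B)" "finite (B \<times> A)"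
    using finite_A finite_B by (simp_all add: finite_offdiag)
  have disj: "(offdiag A \<union> offdiag B) \<inter> (A \<times> B \<union> B \<times> A) = {}"
      "offdiag A \<inter> offdiag B = {}" "(A \<times> B) \<inter> (B \<times> A) = {}"
    using parts_disjoint unfolding offdiag_def by blast+
  have "offdiag V = (offdiag A \<union> offdiag B) \<union> (A \<times> B \<union> B \<times> A)"
    unfolding parts_cover[symmetric] by (rule offdiag_Un[OF parts_disjoint])
  then have "sum ?w (offdiag V) = sum ?w (offdiag A \<union> offdiag B) + sum ?w (A \<times> B \<union> B \<times> A)"
    by (simp only:) (rule sum.union_disjoint, simp_all add: fin disj)
  also have "\<dots> = sum ?w (offdiag A) + sum ?w (offdiag B) + (sum ?w (A \<times> B) + sum ?w (B \<times> A))"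
    by (simp only: sum.union_disjoint fin disj)
  finally have "sum ?w (offdiag V)
      = sum ?w (offdiag A) + sum ?w (offdiag B) + (sum ?w (A \<times> B) + sum ?w (B \<times> A))" .
  moreover have "sum ?w (B \<times> A) = sum ?w (A \<times> B)"
  proof -
    have "sum ?w (B \<times> A) = sum (?w \<circ> prod.swap) (A \<times> B)"
      unfolding product_swap[of A B, symmetric] by (rule sum.reindex) simp
    also have "\<dots> = sum ?w (A \<times> B)"
      by (rule sum.cong) (simp_all add: pair_weight_commute[of "snd p" "fst p" for p])
    finally show ?thesis .
  qed
  moreover have "sum ?w (offdiag A) = (\<Sum>p\<in>offdiag A.
      same_class_weight (real (card A)) (real (card B)) (missing A (fst p) (snd p)) (missing B (fst p) (snd p)))"
    by (rule sum.cong) (auto simp: offdiag_def pair_weight_def)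
  moreover have "sum ?w (offdiag B) = (\<Sum>p\<in>offdiag B.
      same_class_weight (real (card A)) (real (card B)) (missing A (fst p) (snd p)) (missing B (fst p) (snd p)))"
    by (rule sum.cong) (use parts_disjoint in \<open>auto simp: offdiag_def pair_weight_def\<close>)
  moreover have "sum ?w (A \<times> B) = (\<Sum>p\<in>A \<times> B.
      cross_class_weight (real (card A)) (real (card B)) (missing A (fst p) (snd p)) (missing B (fst p) (snd p)))"
    by (rule sum.cong) (use parts_disjoint in \<open>auto simp: pair_weight_def\<close>)
  ultimately show ?thesis by linarith
qed

text \<open>Both sides count the triples (x, y, v) with x, v distinct in X, y in Y and {x, y, v} not
  an edge.\<close>
lemma sum_missing_cross:
  assumes "X \<inter> Y = {}" "finite X" "finite Y"
  shows "(\<Sum>p\<in>X \<times> Y. missing X (fst p) (snd p)) = (\<Sum>p\<in>offdiag X. missing Y (fst p) (snd p))"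
proof -
  have count: "missing Z x w = (\<Sum>v\<in>Z - {x}. of_bool ({x, w, v} \<notin> G))"
    if "w \<notin> Z" "finite Z" for Z x w
  proof -
    have "{v\<in>Z. v \<noteq> x \<and> v \<noteq> w \<and> {x, w, v} \<notin> G} = (Z - {x}) \<inter> {v. {x, w, v} \<notin> G}"
      using that by auto
    then show ?thesis unfolding missing_def using that by simp
  qed
  have "(\<Sum>y\<in>Y. missing X x y) = (\<Sum>v\<in>X - {x}. missing Y x v)" if "x \<in> X" for x
  proof -
    have "(\<Sum>y\<in>Y. missing X x y) = (\<Sum>y\<in>Y. \<Sum>v\<in>X - {x}. of_bool ({x, y, v} \<notin> G))"
      using assms by (intro sum.cong refl count) auto
    also have "\<dots> = (\<Sum>v\<in>X - {x}. \<Sum>y\<in>Y - {x}. of_bool ({x, v, y} \<notin> G))"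
      using assms that by (subst sum.swap) (simp add: insert_commute Diff_triv disjoint_iff)
    also have "\<dots> = (\<Sum>v\<in>X - {x}. missing Y x v)"
      using assms by (intro sum.cong refl count[symmetric]) auto
    finally show ?thesis .
  qed
  then show ?thesis
    using assms by (simp add: sum.cartesian_product' sum_offdiag)
qed

lemma sum_missing_le:
  assumes "P \<subseteq> offdiag V"
  shows "(\<Sum>p\<in>P. missing A (fst p) (snd p)) + (\<Sum>p\<in>P. missing B (fst p) (snd p))
    \<le> card P * (51/200 * real n)"
proof -
  have "(\<Sum>p\<in>P. missing A (fst p) (snd p)) + (\<Sum>p\<in>P. missing B (fst p) (snd p))
      = (\<Sum>p\<in>P. missing A (fst p) (snd p) + missing B (fst p) (snd p))"
    by (simp add: sum.distrib)
  also have "\<dots> \<le> (\<Sum>p\<in>P. 51/200 * real n)"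
    using assms by (intro sum_mono missing_A_add_missing_B_le) (auto simp: offdiag_def)
  finally show ?thesis by simp
qed

lemma completion_count_ge_quartic:
  assumes "1 \<le> n"
  shows "real n ^ 4 / 1000 - 23 * real n ^ 3 \<le> completion_count"
proof -
  let ?a = "real (card A)" and ?b = "real (card B)"
  let ?mA = "\<lambda>p. missing A (fst p) (snd p)" and ?mB = "\<lambda>p. missing B (fst p) (snd p)"
  have fin: "finite (offdiag A)" "finite (offdiag B)"
    using finite_A finite_B by (simp_all add: finite_offdiag)
  have sub: "offdiag A \<subseteq> offdiag V" "A \<times> B \<subseteq> offdiag V" "offdiag B \<subseteq> offdiag V"
    using parts_cover parts_disjoint by (auto simp: offdiag_def)
  have cross_A: "(\<Sum>p\<in>A \<times> B. ?mA p) = (\<Sum>p\<in>offdiag A. ?mB p)"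
    by (rule sum_missing_cross[OF parts_disjoint finite_A finite_B])
  have cross_B: "(\<Sum>p\<in>A \<times> B. ?mB p) = (\<Sum>p\<in>offdiag B. ?mA p)"
  proof -
    have "(\<Sum>p\<in>A \<times> B. ?mB p) = (\<Sum>p\<in>B \<times> A. ?mB p)"
      unfolding product_swap[of A B, symmetric]
      by (simp add: sum.reindex comp_def missing_commute[of B "snd _"])
    also have "\<dots> = (\<Sum>p\<in>offdiag B. ?mA p)"
      using parts_disjoint by (intro sum_missing_cross finite_A finite_B) auto
    finally show ?thesis .
  qed
  have "real n ^ 4 / 1000 - 5 * real n ^ 3 \<le>
      (real (card (offdiag A))*(?a^2 + ?b^2) - 4*?a*(\<Sum>p\<in>offdiag A. ?mA p) - 4*?b*(\<Sum>p\<in>offdiag A. ?mB p)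
        + 3*(\<Sum>p\<in>offdiag A. ?mA p)^2/card (offdiag A) + 3*(\<Sum>p\<in>offdiag A. ?mB p)^2/card (offdiag A))
    + 2*(?a*?b*(2*?a*?b) - 4*?b*(\<Sum>p\<in>offdiag A. ?mB p) - 4*?a*(\<Sum>p\<in>offdiag B. ?mA p))
    + (real (card (offdiag B))*(?a^2 + ?b^2) - 4*?a*(\<Sum>p\<in>offdiag B. ?mA p) - 4*?b*(\<Sum>p\<in>offdiag B. ?mB p)
        + 3*(\<Sum>p\<in>offdiag B. ?mA p)^2/card (offdiag B) + 3*(\<Sum>p\<in>offdiag B. ?mB p)^2/card (offdiag B))"
  proof (rule class_sums_ge)
    show "real n = ?a + ?b" using card_A_add_card_B by (metis of_nat_add)
  qed (use assms card_offdiag finite_A finite_B missing_nonneg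
        sum_missing_le[OF sub(1)] sum_missing_le[OF sub(3)] sum_missing_le[OF sub(2)] cross_A cross_B
       in \<open>auto intro: sum_nonneg simp: card_cartesian_product\<close>)
  also have "\<dots> \<le> (\<Sum>p\<in>offdiag V. pair_weight (fst p) (snd p))"
    unfolding sum_pair_weight_split
    using sum_same_class_weight_ge[of "offdiag A" ?a ?b ?mA ?mB]
      sum_same_class_weight_ge[of "offdiag B" ?a ?b ?mA ?mB]
      sum_cross_class_weight_ge[of "A \<times> B" ?mA ?mB ?a ?b] missing_nonneg cross_A cross_B
    by (simp add: card_cartesian_product)
  finally show ?thesis using completion_count_ge_pair_weights by linarith
qed


lemma card_even_K4s_ge:
  assumes "46000 \<le> n"
  shows "real n ^ 4 / 512000 \<le> card even_K4s"
proof -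
  have "real n ^ 4 / 1000 - 23 * real n ^ 3 \<le> completion_count"
    by (rule completion_count_ge_quartic) (use assms in simp)
  also have "\<dots> \<le> real (256 * card even_K4s)"
    using completion_count_le by (rule of_nat_mono)
  finally have "real n ^ 4 / 1000 - 23 * real n ^ 3 \<le> 256 * real (card even_K4s)" by simp
  moreover have "46000 * real n ^ 3 \<le> real n * real n ^ 3"
    using assms by (intro mult_right_mono) auto
  moreover have "real n * real n ^ 3 = real n ^ 4"
    by (simp add: power3_eq_cube power4_eq_xxxx)
  ultimately show ?thesis by linarith
qed

end

theorem lemma8p9:
  "\<exists>c0::real. c0 > 0 \<and>
     (\<forall>b c. 0 < b \<and> b < c0 \<and> 0 < c \<and> c < c0 \<longrightarrow>
       (\<exists>n0::nat. \<forall>n\<ge>n0. \<forall>G::nat set set. \<forall>A B.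
          is_3graph {..<n} G \<longrightarrow>
          min_codeg_ge {..<n} G ((3/4 - c) * real n) \<longrightarrow>
          A \<union> B = {..<n} \<longrightarrow> A \<inter> B = {} \<longrightarrow>
          real (card {S \<in> K43_copies {..<n} G. even (card (S \<inter> A)) \<and> even (card (S \<inter> B))})
            \<ge> b * real n ^ 4))"
proof (intro exI[of _ "1/512000"] exI[of _ "46000::nat"] conjI allI impI)
  show "(0::real) < 1/512000" by simp
  fix b c :: real and n :: nat and G :: "nat set set" and A B :: "nat set"
  assume bc: "0 < b \<and> b < 1/512000 \<and> 0 < c \<and> c < 1/512000" and n: "46000 \<le> n"
    and "is_3graph {..<n} G" "min_codeg_ge {..<n} G ((3/4 - c) * real n)"
    and "A \<union> B = {..<n}" "A \<inter> B = {}"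
  then interpret codegree_partition n G A B c
    by unfold_locales auto
  have "b * real n ^ 4 \<le> 1/512000 * real n ^ 4"
    using bc by (intro mult_right_mono) auto
  then show "b * real n ^ 4 \<le> real (card {S \<in> K43_copies {..<n} G.
      even (card (S \<inter> A)) \<and> even (card (S \<inter> B))})"
    using card_even_K4s_ge[OF n] unfolding even_K4s_def by linarith
qed

end
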